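(* On the domain $B>0$, $\mathrm{FOV}\in(0,\pi/2]$, both $L_{\mathrm{ADR}}(B,\mathrm{FOV})$ and $A_{\mathrm{ADR}}(B,\mathrm{FOV})$ are strictly decreasing in $B$ (for fixed $\mathrm{FOV}$) and strictly decreasing in $\mathrm{FOV}$ (for fixed $B$).
   Context: Fix constants: an integer $N_{\mathrm{tier}}\ge1$; an integer $N_{\mathrm{PD}}\ge 1$; $\mathrm{FF}\in(0,1]$; $K_{\mathrm{PD}}>0$; $n_{\mathrm{CPC}}\ge 1$. The design variables are $B>0$ and $\mathrm{FOV}\in(0,\pi/2]$. Write $\theta=\theta_{\mathrm{CPC}}=\mathrm{FOV}/(2N_{\mathrm{tier}}+1)$. Set $K_1=\frac{1}{2K_{\mathrm{PD}}}\sqrt{N_{\mathrm{PD}}/\mathrm{FF}}$ and $K_2=\frac{\pi N_{\mathrm{PD}}n_{\mathrm{CPC}}^2}{4\,\mathrm{FF}\,K_{\mathrm{PD}}^2}$, and define the receiver height and top area $L_{\mathrm{ADR}}(B,\mathrm{FOV})=\frac{K_1}{B}\cdot\frac{n_{\mathrm{CPC}}+\sin\theta}{\sin\theta\,\tan\theta}$, $A_{\mathrm{ADR}}(B,\mathrm{FOV})=\frac{K_2}{B^2\sin^2\theta}\Big(1+\sum_{i=1}^{N_{\mathrm{tier}}}6i\cos(2i\theta)\Big)$. *)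

theory Defs
  imports Complex_Main
begin

definition theta_CPC :: "nat \<Rightarrow> real \<Rightarrow> real" where
  "theta_CPC Ntier FOV = FOV / (2 * real Ntier + 1)"

definition K1 :: "nat \<Rightarrow> real \<Rightarrow> real \<Rightarrow> real" where
  "K1 NPD FF KPD = (1 / (2 * KPD)) * sqrt (real NPD / FF)"

definition K2 :: "nat \<Rightarrow> real \<Rightarrow> real \<Rightarrow> real \<Rightarrow> real" where
  "K2 NPD FF KPD nCPC = (pi * real NPD * nCPC^2) / (4 * FF * KPD^2)"

definition L_ADR :: "nat \<Rightarrow> nat \<Rightarrow> real \<Rightarrow> real \<Rightarrow> real \<Rightarrow> real \<Rightarrow> real \<Rightarrow> real" where
  "L_ADR Ntier NPD FF KPD nCPC B FOV =
     (let \<theta> = theta_CPC Ntier FOV in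
      (K1 NPD FF KPD / B) * ((nCPC + sin \<theta>) / (sin \<theta> * tan \<theta>)))"

definition A_ADR :: "nat \<Rightarrow> nat \<Rightarrow> real \<Rightarrow> real \<Rightarrow> real \<Rightarrow> real \<Rightarrow> real \<Rightarrow> real" where
  "A_ADR Ntier NPD FF KPD nCPC B FOV =
     (let \<theta> = theta_CPC Ntier FOV in
      (K2 NPD FF KPD nCPC / (B^2 * (sin \<theta>)^2)) *
        (1 + (\<Sum>i=1..Ntier. 6 * real i * cos (2 * real i * \<theta>))))"

end

theory Submission
  imports Defs
begin

text \<open>Both quantities factor as a positive constant over a power of \<open>B\<close> times a positive
  function of the half-angle \<open>\<theta> = FOV/(2 N + 1)\<close>, which increases with \<open>FOV\<close>. The height factor
  \<open>(n + sin \<theta>)/(sin \<theta> tan \<theta>) = n/(sin \<theta> tan \<theta>) + 1/tan \<theta>\<close> decreases on \<open>(0, \<pi>/2)\<close>. For the area,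
  \<open>2 N \<theta> < \<pi>/2\<close> keeps every \<open>cos (2 i \<theta>)\<close> positive and decreasing, so the tier sum is positive
  and non-increasing while \<open>1/sin\<^sup>2 \<theta>\<close> strictly decreases.\<close>

lemma theta_CPC_pos: "0 < FOV \<Longrightarrow> 0 < theta_CPC N FOV"
  unfolding theta_CPC_def by (simp add: add_pos_nonneg)

lemma theta_CPC_strict_mono: "F1 < F2 \<Longrightarrow> theta_CPC N F1 < theta_CPC N F2"
  unfolding theta_CPC_def by (simp add: divide_strict_right_mono add_pos_nonneg)

lemma theta_CPC_tier_bound:
  assumes "0 < FOV" "FOV \<le> pi/2"
  shows "2 * real N * theta_CPC N FOV < pi/2"
proof -
  have "2 * real N * theta_CPC N FOV = FOV * (2 * real N / (2 * real N + 1))"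
    unfolding theta_CPC_def by simp
  also have "\<dots> < FOV * 1"
    using assms(1) by (intro mult_strict_left_mono) auto
  finally show ?thesis using assms(2) by linarith
qed

lemma theta_CPC_range:
  assumes "1 \<le> N" "0 < FOV" "FOV \<le> pi/2"
  shows "0 < theta_CPC N FOV" "theta_CPC N FOV < pi/2" "2 * real N * theta_CPC N FOV < pi/2"
proof -
  show pos: "0 < theta_CPC N FOV" using assms(2) by (rule theta_CPC_pos)
  show tier: "2 * real N * theta_CPC N FOV < pi/2" using assms(2,3) by (rule theta_CPC_tier_bound)
  have "theta_CPC N FOV \<le> 2 * real N * theta_CPC N FOV" using pos assms(1) by simp
  then show "theta_CPC N FOV < pi/2" using tier by linarith
qed

lemma K1_pos: "0 < NPD \<Longrightarrow> 0 < FF \<Longrightarrow> 0 < KPD \<Longrightarrow> 0 < K1 NPD FF KPD"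
  unfolding K1_def by simp

lemma K2_pos: "0 < NPD \<Longrightarrow> 0 < FF \<Longrightarrow> 0 < KPD \<Longrightarrow> 0 < nCPC \<Longrightarrow> 0 < K2 NPD FF KPD nCPC"
  unfolding K2_def by simp

definition height_factor :: "real \<Rightarrow> real \<Rightarrow> real" where
  "height_factor n t = (n + sin t) / (sin t * tan t)"

definition tier_sum :: "nat \<Rightarrow> real \<Rightarrow> real" where
  "tier_sum N t = 1 + (\<Sum>i=1..N. 6 * real i * cos (2 * real i * t))"

definition area_factor :: "nat \<Rightarrow> real \<Rightarrow> real" where
  "area_factor N t = tier_sum N t / (sin t)\<^sup>2"

lemma L_ADR_eq:
  "L_ADR N NPD FF KPD n B FOV = K1 NPD FF KPD / B * height_factor n (theta_CPC N FOV)"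
  unfolding L_ADR_def height_factor_def Let_def ..

lemma A_ADR_eq:
  "A_ADR N NPD FF KPD n B FOV = K2 NPD FF KPD n / B\<^sup>2 * area_factor N (theta_CPC N FOV)"
  unfolding A_ADR_def area_factor_def tier_sum_def Let_def by simp

lemma height_factor_pos:
  assumes "0 \<le> n" "0 < t" "t < pi/2"
  shows "0 < height_factor n t"
proof -
  have "0 < sin t" "0 < tan t" using assms by (auto intro: sin_gt_zero tan_gt_zero)
  then show ?thesis unfolding height_factor_def using assms(1) by simp
qed

lemma height_factor_strict_antimono:
  assumes "0 \<le> n" "0 < s" "s < t" "t < pi/2"
  shows "height_factor n t < height_factor n s"
proof -
  have sin: "0 < sin s" "sin s < sin t" using assms by (auto intro: sin_gt_zero sin_monotone_2pi)
  have tan: "0 < tan s" "tan s < tan t" using assms by (auto intro: tan_gt_zero tan_monotone)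
  have split: "height_factor n u = n / (sin u * tan u) + 1 / tan u" if "0 < sin u" "0 < tan u" for u
    using that unfolding height_factor_def by (simp add: field_simps)
  have "sin s * tan s < sin t * tan t" using sin tan by (intro mult_strict_mono) auto
  then have "n / (sin t * tan t) \<le> n / (sin s * tan s)"
    using sin tan assms(1) by (intro divide_left_mono) auto
  moreover have "1 / tan t < 1 / tan s" using tan by (intro divide_strict_left_mono) auto
  ultimately show ?thesis using split[of s] split[of t] sin tan by simp
qed

lemma tier_sum_pos:
  assumes "0 \<le> t" "2 * real N * t \<le> pi/2"
  shows "0 < tier_sum N t"
proof -
  have "0 \<le> 6 * real i * cos (2 * real i * t)" if "i \<in> {1..N}" for i
  proof -
    have "2 * real i * t \<le> 2 * real N * t" using that assms(1) by (intro mult_right_mono) auto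
    moreover have "0 \<le> 2 * real i * t" using assms(1) by simp
    ultimately have "0 \<le> cos (2 * real i * t)" using assms(2) by (intro cos_ge_zero) linarith+
    then show ?thesis by simp
  qed
  then have "0 \<le> (\<Sum>i=1..N. 6 * real i * cos (2 * real i * t))" by (rule sum_nonneg)
  then show ?thesis unfolding tier_sum_def by simp
qed

lemma tier_sum_antimono:
  assumes "0 \<le> s" "s \<le> t" "2 * real N * t \<le> pi"
  shows "tier_sum N t \<le> tier_sum N s"
proof -
  have "cos (2 * real i * t) \<le> cos (2 * real i * s)" if "i \<in> {1..N}" for i
  proof (rule cos_monotone_0_pi_le)
    have "2 * real i * t \<le> 2 * real N * t" using that assms by (intro mult_right_mono) auto
    then show "2 * real i * t \<le> pi" using assms(3) by linarith
  qed (use assms in \<open>auto intro: mult_left_mono\<close>)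
  then show ?thesis unfolding tier_sum_def by (auto intro: sum_mono mult_left_mono)
qed

lemma area_factor_pos:
  assumes "0 < t" "t \<le> pi/2" "2 * real N * t \<le> pi/2"
  shows "0 < area_factor N t"
  using assms tier_sum_pos[of t N] sin_gt_zero[of t]
  unfolding area_factor_def by simp

lemma area_factor_strict_antimono:
  assumes "0 < s" "s < t" "t \<le> pi/2" "2 * real N * t \<le> pi/2"
  shows "area_factor N t < area_factor N s"
proof -
  have sin: "0 < sin s" "sin s < sin t" using assms by (auto intro: sin_gt_zero sin_monotone_2pi)
  have tier: "0 < tier_sum N t" "tier_sum N t \<le> tier_sum N s"
    using assms by (auto intro: tier_sum_pos tier_sum_antimono)
  have "tier_sum N t / (sin t)\<^sup>2 < tier_sum N t / (sin s)\<^sup>2"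
    using sin tier by (intro divide_strict_left_mono power_strict_mono) auto
  also have "\<dots> \<le> tier_sum N s / (sin s)\<^sup>2"
    using tier by (intro divide_right_mono) auto
  finally show ?thesis unfolding area_factor_def .
qed

theorem proposition2:
  fixes Ntier NPD :: nat and FF KPD nCPC :: real
  assumes "Ntier \<ge> 1" and "NPD \<ge> 1" and "0 < FF" and "FF \<le> 1"
    and "KPD > 0" and "nCPC \<ge> 1"
  shows "(\<forall>FOV B1 B2. 0 < FOV \<and> FOV \<le> pi/2 \<and> 0 < B1 \<and> B1 < B2 \<longrightarrow>
            L_ADR Ntier NPD FF KPD nCPC B2 FOV < L_ADR Ntier NPD FF KPD nCPC B1 FOV \<and>
            A_ADR Ntier NPD FF KPD nCPC B2 FOV < A_ADR Ntier NPD FF KPD nCPC B1 FOV)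
       \<and> (\<forall>B F1 F2. 0 < B \<and> 0 < F1 \<and> F1 < F2 \<and> F2 \<le> pi/2 \<longrightarrow>
            L_ADR Ntier NPD FF KPD nCPC B F2 < L_ADR Ntier NPD FF KPD nCPC B F1 \<and>
            A_ADR Ntier NPD FF KPD nCPC B F2 < A_ADR Ntier NPD FF KPD nCPC B F1)"
proof -
  have K: "0 < K1 NPD FF KPD" "0 < K2 NPD FF KPD nCPC"
    using assms by (simp_all add: K1_pos K2_pos)
  note \<theta> = theta_CPC_range[OF assms(1)]
  show ?thesis
  proof (intro conjI allI impI; elim conjE)
    fix FOV B1 B2 :: real
    assume "0 < FOV" "FOV \<le> pi/2" "0 < B1" "B1 < B2"
    note \<theta>FOV = \<theta>[OF \<open>0 < FOV\<close> \<open>FOV \<le> pi/2\<close>]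
    have factors: "0 < height_factor nCPC (theta_CPC Ntier FOV)"
      "0 < area_factor Ntier (theta_CPC Ntier FOV)"
      using \<theta>FOV assms(6)
      by (auto intro!: height_factor_pos area_factor_pos less_imp_le)
    have "K1 NPD FF KPD / B2 < K1 NPD FF KPD / B1" "K2 NPD FF KPD nCPC / B2\<^sup>2 < K2 NPD FF KPD nCPC / B1\<^sup>2"
      using K \<open>0 < B1\<close> \<open>B1 < B2\<close> by (auto intro!: divide_strict_left_mono power_strict_mono)
    with factors show "L_ADR Ntier NPD FF KPD nCPC B2 FOV < L_ADR Ntier NPD FF KPD nCPC B1 FOV"
      and "A_ADR Ntier NPD FF KPD nCPC B2 FOV < A_ADR Ntier NPD FF KPD nCPC B1 FOV"
      unfolding L_ADR_eq A_ADR_eq by (meson mult_strict_right_mono)+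
  next
    fix B F1 F2 :: real
    assume "0 < B" "0 < F1" "F1 < F2" "F2 \<le> pi/2"
    note \<theta>F1 = \<theta>[OF \<open>0 < F1\<close>] and \<theta>F2 = \<theta>[OF order.strict_trans[OF \<open>0 < F1\<close> \<open>F1 < F2\<close>]]
    have "theta_CPC Ntier F1 < theta_CPC Ntier F2" using \<open>F1 < F2\<close> by (rule theta_CPC_strict_mono)
    then have "height_factor nCPC (theta_CPC Ntier F2) < height_factor nCPC (theta_CPC Ntier F1)"
      "area_factor Ntier (theta_CPC Ntier F2) < area_factor Ntier (theta_CPC Ntier F1)"
      using \<theta>F1 \<theta>F2 \<open>F1 < F2\<close> \<open>F2 \<le> pi/2\<close> assms(6)
      by (auto intro!: height_factor_strict_antimono area_factor_strict_antimono less_imp_le)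
    moreover have "0 < K1 NPD FF KPD / B" "0 < K2 NPD FF KPD nCPC / B\<^sup>2" using K \<open>0 < B\<close> by auto
    ultimately show "L_ADR Ntier NPD FF KPD nCPC B F2 < L_ADR Ntier NPD FF KPD nCPC B F1"
      and "A_ADR Ntier NPD FF KPD nCPC B F2 < A_ADR Ntier NPD FF KPD nCPC B F1"
      unfolding L_ADR_eq A_ADR_eq by (meson mult_strict_left_mono)+
  qed
qed

end
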